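(* Let $\pi=(\pi_n^{n+1}\colon X_{n+1}\to X_n)_{n\ge1}$ be an inverse sequence of continuous maps between compact metric spaces. Then the following are equivalent: (1) $\pi$ satisfies MLC(1); (2) for any $n\ge1$ and $m\ge n+1$, $\pi_n^{n+1}(X_{n+1})=\pi_n^m(X_m)$; (3) for every $n\ge1$, $\hat{X}_n=\pi_n^{n+1}(X_{n+1})$.
   Context: For $m\ge n\ge1$, $\pi_n^m\colon X_m\to X_n$ is the identity if $m=n$ and $\pi_n^{n+1}\circ\pi_{n+1}^{n+2}\circ\cdots\circ\pi_{m-1}^m$ if $m>n$. $\hat{X}_n=\bigcap_{m\ge n}\pi_n^m(X_m)$. $\pi$ satisfies MLC(1) if $\pi_n^{n+1}(X_{n+1})=\pi_n^{n+2}(X_{n+2})$ for every $n\ge1$. *)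

theory Defs
  imports "HOL-Analysis.Analysis"
begin

text \<open>An inverse sequence is given by spaces X n (n \<ge> 1) and bonding maps p n : X (n+1) \<rightarrow> X n.
  The composite pi_nm p n k is pi_n^{n+k} = p n \<circ> p (n+1) \<circ> ... \<circ> p (n+k-1).\<close>

primrec pi_iter :: "(nat \<Rightarrow> 'a \<Rightarrow> 'a) \<Rightarrow> nat \<Rightarrow> nat \<Rightarrow> 'a \<Rightarrow> 'a" where
  "pi_iter p n 0 = id"
| "pi_iter p n (Suc k) = pi_iter p n k \<circ> p (n + k)"

definition pi_nm :: "(nat \<Rightarrow> 'a \<Rightarrow> 'a) \<Rightarrow> nat \<Rightarrow> nat \<Rightarrow> 'a \<Rightarrow> 'a" where
  "pi_nm p n m = pi_iter p n (m - n)"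

definition Xhat :: "(nat \<Rightarrow> 'a set) \<Rightarrow> (nat \<Rightarrow> 'a \<Rightarrow> 'a) \<Rightarrow> nat \<Rightarrow> 'a set" where
  "Xhat X p n = (\<Inter>m\<in>{n..}. pi_nm p n m ` X m)"

definition MLC1 :: "(nat \<Rightarrow> 'a set) \<Rightarrow> (nat \<Rightarrow> 'a \<Rightarrow> 'a) \<Rightarrow> bool" where
  "MLC1 X p \<longleftrightarrow> (\<forall>n\<ge>1. p n ` X (Suc n) = pi_nm p n (n + 2) ` X (n + 2))"

end

theory Submission
  imports Defs
begin

text \<open>MLC(1) at level k says that p k \<circ> p (k+1) and p k have the same image. Applying
  pi_n^k to this equation shows that the images pi_n^m(X m) do not change from m = n+1 on, so
  MLC(1) propagates to all longer composites. Then Xhat n is the intersection of X n with a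
  sequence of sets that is constant from its second term on, i.e. equal to p n ` X (n+1);
  conversely Xhat n \<subseteq> pi_n^{n+2}(X (n+2)) \<subseteq> p n ` X (n+1) recovers MLC(1).\<close>

lemma pi_nm_refl: "pi_nm p n n = id"
  by (simp add: pi_nm_def)

lemma pi_nm_Suc: "n \<le> m \<Longrightarrow> pi_nm p n (Suc m) = pi_nm p n m \<circ> p m"
  by (simp add: pi_nm_def Suc_diff_le)

lemma pi_nm_Suc_self: "pi_nm p n (Suc n) = p n"
  by (simp add: pi_nm_Suc pi_nm_refl)

lemma pi_nm_Suc_Suc_self: "pi_nm p n (Suc (Suc n)) = p n \<circ> p (Suc n)"
  by (simp add: pi_nm_Suc pi_nm_Suc_self)

lemma image_pi_nm_Suc_subset:
  assumes "n \<le> m" and "p m ` X (Suc m) \<subseteq> X m"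
  shows "pi_nm p n (Suc m) ` X (Suc m) \<subseteq> pi_nm p n m ` X m"
  using assms by (auto simp: pi_nm_Suc)

lemma image_pi_nm_Suc_Suc_eq:
  assumes "n \<le> k" and "p k ` p (Suc k) ` X (Suc (Suc k)) = p k ` X (Suc k)"
  shows "pi_nm p n (Suc (Suc k)) ` X (Suc (Suc k)) = pi_nm p n (Suc k) ` X (Suc k)"
proof -
  have "pi_nm p n (Suc (Suc k)) ` X (Suc (Suc k)) = pi_nm p n k ` p k ` p (Suc k) ` X (Suc (Suc k))"
    using assms(1) by (simp add: pi_nm_Suc image_comp)
  also have "\<dots> = pi_nm p n k ` p k ` X (Suc k)"
    using assms(2) by simp
  also have "\<dots> = pi_nm p n (Suc k) ` X (Suc k)"
    using assms(1) by (simp add: pi_nm_Suc image_comp)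
  finally show ?thesis .
qed

lemma MLC1_image_pi_nm_stable:
  assumes mlc: "MLC1 X p" and "n \<ge> 1" and "Suc n \<le> m"
  shows "pi_nm p n m ` X m = p n ` X (Suc n)"
  using assms(3)
proof (induction m rule: dec_induct)
  case base
  show ?case by (simp add: pi_nm_Suc_self)
next
  case (step m)
  then obtain k where k: "m = Suc k" "n \<le> k"
    by (cases m) auto
  have "p k ` X (Suc k) = pi_nm p k (k + 2) ` X (k + 2)"
    using mlc k \<open>n \<ge> 1\<close> unfolding MLC1_def by simp
  then have "p k ` p (Suc k) ` X (Suc (Suc k)) = p k ` X (Suc k)"
    by (simp add: pi_nm_Suc_Suc_self image_comp)
  with k have "pi_nm p n (Suc m) ` X (Suc m) = pi_nm p n m ` X m"
    by (simp add: image_pi_nm_Suc_Suc_eq)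
  with step.IH show ?case by simp
qed

lemma Xhat_subset_image: "n \<le> m \<Longrightarrow> Xhat X p n \<subseteq> pi_nm p n m ` X m"
  unfolding Xhat_def by (rule INT_lower) simp

lemma Xhat_eq_image_if_stable:
  assumes "p n ` X (Suc n) \<subseteq> X n"
    and stable: "\<And>m. Suc n \<le> m \<Longrightarrow> pi_nm p n m ` X m = p n ` X (Suc n)"
  shows "Xhat X p n = p n ` X (Suc n)"
proof
  show "Xhat X p n \<subseteq> p n ` X (Suc n)"
    using Xhat_subset_image[of n "Suc n" X p] by (simp add: pi_nm_Suc_self)
  have "p n ` X (Suc n) \<subseteq> pi_nm p n m ` X m" if "n \<le> m" for m
  proof (cases "m = n")
    case True
    with assms(1) show ?thesis by (simp add: pi_nm_refl)
  next
    case False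
    with that stable[of m] show ?thesis by simp
  qed
  then show "p n ` X (Suc n) \<subseteq> Xhat X p n"
    unfolding Xhat_def by blast
qed

lemma MLC1_if_Xhat_eq_image:
  assumes maps: "\<And>n. n \<ge> 1 \<Longrightarrow> p n ` X (Suc n) \<subseteq> X n"
    and Xhat: "\<And>n. n \<ge> 1 \<Longrightarrow> Xhat X p n = p n ` X (Suc n)"
  shows "MLC1 X p"
  unfolding MLC1_def
proof (intro allI impI)
  fix n :: nat
  assume "n \<ge> 1"
  have "p n ` X (Suc n) \<subseteq> pi_nm p n (Suc (Suc n)) ` X (Suc (Suc n))"
    using Xhat[OF \<open>n \<ge> 1\<close>] Xhat_subset_image[of n "Suc (Suc n)" X p] by simp
  moreover have "pi_nm p n (Suc (Suc n)) ` X (Suc (Suc n)) \<subseteq> p n ` X (Suc n)"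
    using image_pi_nm_Suc_subset[of n "Suc n" p X] maps[of "Suc n"] by (simp add: pi_nm_Suc_self)
  ultimately show "p n ` X (Suc n) = pi_nm p n (n + 2) ` X (n + 2)"
    by simp
qed

theorem lemma2p1:
  fixes X :: "nat \<Rightarrow> 'a::metric_space set" and p :: "nat \<Rightarrow> 'a \<Rightarrow> 'a"
  assumes compact: "\<And>n. n \<ge> 1 \<Longrightarrow> compact (X n)"
    and cont: "\<And>n. n \<ge> 1 \<Longrightarrow> continuous_on (X (Suc n)) (p n)"
    and maps: "\<And>n. n \<ge> 1 \<Longrightarrow> p n ` X (Suc n) \<subseteq> X n"
  shows "(MLC1 X p \<longleftrightarrow> (\<forall>n\<ge>1. \<forall>m\<ge>n+1. p n ` X (Suc n) = pi_nm p n m ` X m))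
       \<and> (MLC1 X p \<longleftrightarrow> (\<forall>n\<ge>1. Xhat X p n = p n ` X (Suc n)))"
proof -
  let ?stable = "\<forall>n\<ge>1. \<forall>m\<ge>n+1. p n ` X (Suc n) = pi_nm p n m ` X m"
  have "MLC1 X p \<longleftrightarrow> ?stable"
  proof
    show "MLC1 X p \<Longrightarrow> ?stable"
      using MLC1_image_pi_nm_stable[of X p] by simp
    show "?stable \<Longrightarrow> MLC1 X p"
      unfolding MLC1_def by simp
  qed
  moreover have "\<forall>n\<ge>1. Xhat X p n = p n ` X (Suc n)" if ?stable
    using that maps Xhat_eq_image_if_stable[of p n X for n] by simp
  moreover have "MLC1 X p" if "\<forall>n\<ge>1. Xhat X p n = p n ` X (Suc n)"
    using that maps MLC1_if_Xhat_eq_image[of p X] by blast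
  ultimately show ?thesis
    by blast
qed

end
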